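(* Let $n\in\mathbb{N}$ and $0<s_1,\dots,s_n<1$ pairwise distinct. Then $$\mathcal{E}_\mu(s_1^z,\dots,s_n^z)\cap\prod_{j=1}^n\big(s_j^{-1/2}\mathbb{T}\cup\{0\}\big)=\Big(\mathcal{E}_\mu(s_1^z,\dots,s_n^z)\cap\prod_{j=1}^n s_j^{-1/2}\mathbb{T}\Big)\cup\{(0,\dots,0)\}.$$
   Context: $\mu$ is the measure on $\Omega=\{\mathrm{Re}\,z\ge-\tfrac12\}$ given by $d\mu=\sum_{n=-1}^\infty \frac{|\Gamma(\frac n2+iy+1)|^2}{2\pi(n+1)!}\,dy\,d\delta_{n/2}(x)$; $s^z=e^{z\ln s}$; $\mathbb{T}$ the unit circle. For $\varphi_1,\dots,\varphi_n\in L^\infty(\mu)$, the joint essential range $\mathcal{E}_\mu(\varphi_1,\dots,\varphi_n)$ is the set of $\lambda\in\mathbb{C}^n$ such that for every $\varepsilon>0$, $\mu(\{z:\sum_j|\varphi_j(z)-\lambda_j|<\varepsilon\})>0$. *)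

theory Defs
  imports "HOL-Analysis.Analysis"
begin

text \<open>Density of the n-th line (indexed by k = n+1, so n = k-1 ranges over -1,0,1,...):
  |Gamma(n/2 + i y + 1)|^2 / (2 pi (n+1)!).\<close>
definition mu_weight :: "nat \<Rightarrow> real \<Rightarrow> real" where
  "mu_weight k y = (cmod (Gamma (Complex ((real k - 1) / 2 + 1) y)))\<^sup>2 / (2 * pi * fact k)"

definition mu :: "complex set \<Rightarrow> ennreal" where
  "mu A = (\<Sum>k. \<integral>\<^sup>+ y. ennreal (mu_weight k y) * indicator A (Complex ((real k - 1) / 2) y) \<partial>lborel)"

definition spow :: "real \<Rightarrow> complex \<Rightarrow> complex" where
  "spow s z = exp (z * complex_of_real (ln s))"

text \<open>Joint essential range of a list of functions w.r.t. a set function m; points of C^n are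
  lists of length n.\<close>
definition ess_range :: "(complex set \<Rightarrow> ennreal) \<Rightarrow> (complex \<Rightarrow> complex) list \<Rightarrow> complex list set" where
  "ess_range m \<phi>s = {l. length l = length \<phi>s \<and>
     (\<forall>\<epsilon>>0. m {z. (\<Sum>j<length \<phi>s. cmod ((\<phi>s ! j) z - l ! j)) < \<epsilon>} > 0)}"

end

theory Submission
  imports Defs
begin

text \<open>
  Write \<open>F(z) = (s\<^sub>1\<^sup>z, \<dots>, s\<^sub>n\<^sup>z)\<close> with \<open>0 < s\<^sub>j < 1\<close>; then \<open>|s\<^sub>j\<^sup>z| = s\<^sub>j\<^sup>Re z\<close>.
  \<^item> The zero vector lies in the essential range: on the line \<open>Re z = (k-1)/2\<close>, which
    carries positive \<open>\<mu>\<close>-mass, every \<open>|s\<^sub>j\<^sup>z|\<close> equals \<open>s\<^sub>j\<^sup>-\<^sup>1\<^sup>/\<^sup>2 (\<surd>s\<^sub>j)\<^sup>k\<close>, which tends to 0.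
  \<^item> No point of the essential range has a zero coordinate \<open>i\<close> and a coordinate \<open>j\<close> of
    modulus \<open>s\<^sub>j\<^sup>-\<^sup>1\<^sup>/\<^sup>2 > 1\<close>: where \<open>Re z \<le> 0\<close> we have \<open>|s\<^sub>i\<^sup>z| \<ge> 1\<close>, where \<open>Re z > 0\<close> we have
    \<open>|s\<^sub>j\<^sup>z| < 1\<close>, so a small neighbourhood of such a point is never met by \<open>F\<close> at all,
    hence has \<open>\<mu>\<close>-measure 0.
  The theorem follows: a point of the left-hand side either has no zero coordinate,
  or all its coordinates vanish.
\<close>

lemma nn_integral_lborel_pos:
  fixes f :: "real \<Rightarrow> real"
  assumes meas: "f \<in> borel_measurable borel" and pos: "\<And>y. f y > 0"
  shows "(\<integral>\<^sup>+ y. ennreal (f y) \<partial>lborel) > 0"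
proof (rule ccontr)
  assume "\<not> ?thesis"
  hence "(\<integral>\<^sup>+ y. ennreal (f y) \<partial>lborel) = 0" by (simp add: not_less)
  hence "AE y in lborel. ennreal (f y) = 0"
    using nn_integral_0_iff_AE[of "\<lambda>y. ennreal (f y)" lborel] meas by simp
  hence "AE (y::real) in lborel. False"
    by (rule eventually_mono) (use pos in \<open>auto simp: less_le\<close>)
  then obtain N where "UNIV \<subseteq> N" "emeasure (lborel :: real measure) N = 0"
    by (auto elim!: AE_E)
  hence "N = UNIV" "emeasure (lborel :: real measure) N = 0" by auto
  thus False by simp
qed

text \<open>The Gamma factor in the density never vanishes, since its argument has
  real part \<open>(k+1)/2 > 0\<close>.\<close>
lemma mu_weight_pos: "mu_weight k y > 0"
proof -
  let ?a = "(real k - 1) / 2 + 1"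
  have a: "?a > 0" by (simp add: field_simps)
  have "Complex ?a y \<notin> \<int>\<^sub>\<le>\<^sub>0"
  proof
    assume "Complex ?a y \<in> \<int>\<^sub>\<le>\<^sub>0"
    then obtain n where "Complex ?a y = of_int n" "n \<le> 0" by (auto elim!: nonpos_Ints_cases)
    hence "?a = of_int n" by (metis complex.sel(1) Re_complex_of_real of_real_of_int_eq)
    thus False using a \<open>n \<le> 0\<close> by linarith
  qed
  hence "Gamma (Complex ?a y) \<noteq> 0" by (rule Gamma_nonzero)
  thus ?thesis by (simp add: mu_weight_def)
qed

lemma mu_weight_measurable: "mu_weight k \<in> borel_measurable borel"
proof -
  let ?a = "(real k - 1) / 2 + 1"
  have "continuous_on UNIV (\<lambda>y. Gamma (Complex ?a y))"
  proof (rule continuous_on_compose2[OF continuous_on_Gamma[of "{z. Re z > 0}"]])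
    show "{z. Re z > 0} \<inter> \<int>\<^sub>\<le>\<^sub>0 = {}" by (auto elim!: nonpos_Ints_cases)
    show "continuous_on UNIV (\<lambda>y. Complex ?a y)"
      unfolding Complex_eq by (intro continuous_intros)
    show "(\<lambda>y. Complex ?a y) ` UNIV \<subseteq> {z. Re z > 0}" by (auto simp: field_simps)
  qed
  hence "continuous_on UNIV (mu_weight k)"
    unfolding mu_weight_def by (intro continuous_intros) auto
  thus ?thesis by (rule borel_measurable_continuous_onI)
qed

lemma mu_line_pos:
  assumes "\<And>y. Complex ((real k - 1) / 2) y \<in> A"
  shows "mu A > 0"
proof -
  let ?line = "\<lambda>k. \<integral>\<^sup>+ y. ennreal (mu_weight k y) * indicator A (Complex ((real k - 1) / 2) y) \<partial>lborel"
  have "?line k = (\<integral>\<^sup>+ y. ennreal (mu_weight k y) \<partial>lborel)"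
    using assms by simp
  also have "\<dots> > 0"
    by (rule nn_integral_lborel_pos[OF mu_weight_measurable mu_weight_pos])
  finally have "0 < ?line k" .
  also have "?line k \<le> mu A"
    unfolding mu_def by (rule sum_le_suminf[of _ "{k}", simplified]) auto
  finally show ?thesis .
qed

lemma ess_range_approx:
  assumes "l \<in> ess_range m \<phi>s" "m {} = 0" "e > 0"
  obtains z where "(\<Sum>j<length \<phi>s. cmod ((\<phi>s ! j) z - l ! j)) < e"
proof -
  have "m {z. (\<Sum>j<length \<phi>s. cmod ((\<phi>s ! j) z - l ! j)) < e} > 0"
    using assms(1,3) unfolding ess_range_def by blast
  hence "{z. (\<Sum>j<length \<phi>s. cmod ((\<phi>s ! j) z - l ! j)) < e} \<noteq> {}"
    using assms(2) by (metis less_irrefl)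
  thus ?thesis using that by blast
qed

lemma cmod_spow: "cmod (spow s z) = exp (Re z * ln s)"
  by (simp add: spow_def)

lemma cmod_spow_powr: "s > 0 \<Longrightarrow> cmod (spow s z) = s powr Re z"
  by (simp add: cmod_spow powr_def mult.commute)

lemma cmod_spow_ge_1: "0 < s \<Longrightarrow> s < 1 \<Longrightarrow> Re z \<le> 0 \<Longrightarrow> cmod (spow s z) \<ge> 1"
  by (simp add: cmod_spow mult_nonpos_nonpos)

lemma cmod_spow_lt_1: "0 < s \<Longrightarrow> s < 1 \<Longrightarrow> Re z > 0 \<Longrightarrow> cmod (spow s z) < 1"
  by (simp add: cmod_spow mult_pos_neg)

lemma cmod_spow_line:
  assumes "s > 0"
  shows "cmod (spow s (Complex ((real k - 1) / 2) y)) = s powr (-1/2) * sqrt s ^ k"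
proof -
  have "sqrt s ^ k = s powr (real k / 2)"
    using assms by (simp add: powr_half_sqrt[symmetric] powr_realpow[symmetric] powr_powr)
  thus ?thesis
    using assms by (simp add: cmod_spow_powr powr_add[symmetric] diff_divide_distrib)
qed

lemma zero_in_ess_range:
  assumes s: "\<forall>j<length s. 0 < s ! j \<and> s ! j < 1"
  shows "replicate (length s) 0 \<in> ess_range mu (map spow s)"
proof -
  have "mu {z. (\<Sum>j<length s. cmod (spow (s ! j) z)) < e} > 0" if e: "e > 0" for e
  proof -
    define f where "f k = (\<Sum>j<length s. (s ! j) powr (-1/2) * sqrt (s ! j) ^ k)" for k
    have "f \<longlonglongrightarrow> (\<Sum>j<length s. (s ! j) powr (-1/2) * 0)"
      unfolding f_def
      by (intro tendsto_sum tendsto_mult tendsto_const LIMSEQ_power_zero) (use s in auto)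
    hence "\<forall>\<^sub>F k in sequentially. f k < e" using e by (simp add: order_tendstoD(2))
    then obtain k where k: "f k < e" by (meson eventually_sequentially order_refl)
    show ?thesis
      by (rule mu_line_pos[of k]) (use k s in \<open>simp add: f_def cmod_spow_line\<close>)
  qed
  thus ?thesis unfolding ess_range_def by simp
qed

lemma ess_range_no_mixed_point:
  assumes s: "\<forall>j<length s. 0 < s ! j \<and> s ! j < 1"
    and l: "l \<in> ess_range mu (map spow s)"
    and i: "i < length s" "l ! i = 0"
    and j: "j < length s" "cmod (l ! j) = (s ! j) powr (-1/2)"
  shows False
proof -
  have si: "0 < s ! i" "s ! i < 1" and sj: "0 < s ! j" "s ! j < 1" using s i j by auto
  have "1 powr (-1/2::real) < (s ! j) powr (-1/2)"
    by (rule powr_less_mono2_neg) (use sj in auto)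
  hence gt1: "(s ! j) powr (-1/2) > 1" by simp
  define e where "e = min 1 ((s ! j) powr (-1/2) - 1)"
  have "e > 0" using gt1 by (simp add: e_def)
  have "mu {} = 0" by (simp add: mu_def)
  then obtain z where z: "(\<Sum>k<length s. cmod (spow (s ! k) z - l ! k)) < e"
    using ess_range_approx[OF l _ \<open>e > 0\<close>] by auto
  have close: "cmod (spow (s ! k) z - l ! k) < e" if "k < length s" for k
    by (rule le_less_trans[OF member_le_sum z]) (use that in auto)
  show False
  proof (cases "Re z \<le> 0")
    case True
    have "1 \<le> cmod (spow (s ! i) z)" by (rule cmod_spow_ge_1[OF si True])
    thus False using close[OF i(1)] i(2) by (simp add: e_def)
  next
    case False
    have "cmod (spow (s ! j) z) < 1" using cmod_spow_lt_1[OF sj] False by simp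
    moreover have "cmod (l ! j) \<le> cmod (spow (s ! j) z) + cmod (spow (s ! j) z - l ! j)"
      using norm_triangle_ineq2[of "l ! j" "spow (s ! j) z"] by (simp add: norm_minus_commute)
    ultimately show False using close[OF j(1)] j(2) by (simp add: e_def)
  qed
qed

theorem mainTheorem8:
  fixes s :: "real list"
  assumes "distinct s"
    and "\<forall>j<length s. 0 < s ! j \<and> s ! j < 1"
  shows "ess_range mu (map spow s) \<inter>
           {l. length l = length s \<and> (\<forall>j<length s. cmod (l ! j) = (s ! j) powr (-1/2) \<or> l ! j = 0)}
       = (ess_range mu (map spow s) \<inter>
           {l. length l = length s \<and> (\<forall>j<length s. cmod (l ! j) = (s ! j) powr (-1/2))})
         \<union> {replicate (length s) 0}"
proof (intro equalityI subsetI)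
  fix l assume l: "l \<in> ess_range mu (map spow s) \<inter>
           {l. length l = length s \<and> (\<forall>j<length s. cmod (l ! j) = (s ! j) powr (-1/2) \<or> l ! j = 0)}"
  show "l \<in> (ess_range mu (map spow s) \<inter>
           {l. length l = length s \<and> (\<forall>j<length s. cmod (l ! j) = (s ! j) powr (-1/2))})
         \<union> {replicate (length s) 0}"
  proof (cases "\<exists>i<length s. l ! i = 0")
    case True
    then obtain i where "i < length s" "l ! i = 0" by blast
    hence "\<forall>j<length s. l ! j = 0"
      using ess_range_no_mixed_point[OF assms(2)] l by blast
    hence "l = replicate (length s) 0" using l by (intro nth_equalityI) auto
    thus ?thesis by simp
  next
    case False
    thus ?thesis using l by auto
  qed
qed (use zero_in_ess_range[OF assms(2)] in auto)

end
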